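(* In the setting below, for each $1\le k\le n$ and each $1\le t\le mn$, $$\mathbb{E}\left(X_{k,t+1}\mid g_{\le t}, z_{\le t-1}\right)\le X_{k,t}.$$
   Context: Setting: $m,n$ are positive integers with $n\ge 1200\sqrt m$. A deck of $mn$ cards with $m$ copies of each label $1,\dots,n$ is shuffled uniformly at random. A fixed guessing strategy is used: in round $t=1,\dots,mn$ the Guesser guesses $g_t\in\{1,\dots,n\}$, a function (possibly randomized independently of the deck) of $y_1,\dots,y_{t-1}$, where $y_t\in\{0,1\}$ is the indicator that the $t$-th card has label $g_t$. For a vector $v$, $v_{\le t}:=(v_1,\dots,v_t)$. For $1\le k\le n$, $1\le t\le mn+1$: $a(k,t):=|\{1\le i<t: g_i=k\}|$. Let $Y:=\lfloor \tfrac16\sqrt m\, n\rfloor$. Let $(z_1,\dots,z_{mn})\in\{0,1\}^{mn}$ be a random vector (on an extension of the probability space), with $c(k,t):=|\{1\le i<t: g_i=k,\ z_i=1\}|$, satisfying almost surely: (a) for all $k,t$: $m-\max\{mn-a(k,t)-Y,0\}\le c(k,t)\le m$; (b) for each $t$, conditioned on $g_{\le t},y_{\le t}$, the coordinates of $z_{\le t}$ are mutually independent and independent from $g_{\le mn},y_{\le mn}$; (c) for each $t$, if $a(g_t,t)<mn-Y$ then $\mathbb{E}(z_t\mid g_{\le t},z_{\le t-1})=\frac{m-c(g_t,t)}{mn-a(g_t,t)-Y}$; (d) for each $t$, if $\mathbb{E}(y_t\mid g_{\le t},y_{\le t-1})\le\mathbb{E}(z_t\mid g_{\le t},z_{\le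 t-1})$ then $y_t\le z_t$. (Such a vector exists.) Define $f:\mathbb{R}\to\mathbb{R}$ by $f(x)=x^2$ if $x\le 0$, $f(x)=0$ if $0<x<Y/n$, and $f(x)=(x-Y/n)^2$ if $x\ge Y/n$. For $1\le k\le n$, $1\le t\le mn+1$, let $$X_{k,t}:=f\!\left(c(k,t)-\frac{a(k,t)}{n}\right)-3c(k,t)-\frac{3a(k,t)}{n}.$$ *)

theory Defs
  imports "HOL-Probability.Probability"
begin

definition decks :: "nat \<Rightarrow> nat \<Rightarrow> (nat \<Rightarrow> nat) set" where
  "decks m n = {d. (\<forall>i\<in>{1..m*n}. d i \<in> {1..n}) \<and> (\<forall>i. i \<notin> {1..m*n} \<longrightarrow> d i = 0)
                  \<and> (\<forall>k\<in>{1..n}. card {i\<in>{1..m*n}. d i = k} = m)}"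

definition Yc :: "nat \<Rightarrow> nat \<Rightarrow> nat" where
  "Yc m n = nat \<lfloor>sqrt (real m) * real n / 6\<rfloor>"

definition yind :: "('a \<Rightarrow> nat \<Rightarrow> nat) \<Rightarrow> (nat \<Rightarrow> 'a \<Rightarrow> nat) \<Rightarrow> nat \<Rightarrow> 'a \<Rightarrow> nat" where
  "yind deck g t \<omega> = (if deck \<omega> t = g t \<omega> then 1 else 0)"

definition acnt :: "(nat \<Rightarrow> 'a \<Rightarrow> nat) \<Rightarrow> nat \<Rightarrow> nat \<Rightarrow> 'a \<Rightarrow> nat" where
  "acnt g k t \<omega> = card {i. 1 \<le> i \<and> i < t \<and> g i \<omega> = k}"

definition ccnt :: "(nat \<Rightarrow> 'a \<Rightarrow> nat) \<Rightarrow> (nat \<Rightarrow> 'a \<Rightarrow> nat) \<Rightarrow> nat \<Rightarrow> nat \<Rightarrow> 'a \<Rightarrow> nat" where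
  "ccnt g z k t \<omega> = card {i. 1 \<le> i \<and> i < t \<and> g i \<omega> = k \<and> z i \<omega> = 1}"

definition fpen :: "nat \<Rightarrow> nat \<Rightarrow> real \<Rightarrow> real" where
  "fpen m n x = (if x \<le> 0 then x\<^sup>2
                 else if x < real (Yc m n) / real n then 0
                 else (x - real (Yc m n) / real n)\<^sup>2)"

definition Xv :: "nat \<Rightarrow> nat \<Rightarrow> (nat \<Rightarrow> 'a \<Rightarrow> nat) \<Rightarrow> (nat \<Rightarrow> 'a \<Rightarrow> nat) \<Rightarrow> nat \<Rightarrow> nat \<Rightarrow> 'a \<Rightarrow> real" where
  "Xv m n g z k t \<omega> =
     fpen m n (real (ccnt g z k t \<omega>) - real (acnt g k t \<omega>) / real n)
     - 3 * real (ccnt g z k t \<omega>) - 3 * real (acnt g k t \<omega>) / real n"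

definition gen_alg :: "'a measure \<Rightarrow> ('a \<Rightarrow> 'b) \<Rightarrow> 'a measure" where
  "gen_alg M h = vimage_algebra (space M) h (count_space UNIV)"

definition cond_indep_sets :: "'a measure \<Rightarrow> 'a measure \<Rightarrow> ('i \<Rightarrow> 'a set set) \<Rightarrow> 'i set \<Rightarrow> bool" where
  "cond_indep_sets M F S I \<longleftrightarrow>
     (\<forall>j\<in>I. S j \<subseteq> sets M) \<and>
     (\<forall>J\<subseteq>I. J \<noteq> {} \<longrightarrow> finite J \<longrightarrow> (\<forall>A. (\<forall>j\<in>J. A j \<in> S j) \<longrightarrow>
        (AE \<omega> in M. real_cond_exp M F (indicator (\<Inter>j\<in>J. A j)) \<omega>
                     = (\<Prod>j\<in>J. real_cond_exp M F (indicator (A j)) \<omega>))))"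

end

theory Submission
  imports Defs
begin

text \<open>
  Fix k and t and condition on the history (g_{\<le>t}, z_{<t}). It determines a = a(k,t),
  c = c(k,t) and whether g_t = k; if so, (a, c) becomes (a + 1, c + z_t), so X_{k,\<cdot>} changes
  by an amount affine in z_t, and the conditional expected change is the same affine
  expression evaluated at p = E(z_t | history).

  If a < mn - Y, condition (c) gives p = (m - c)/(mn - a - Y), which is at least 1/n when
  x = c - a/n \<le> 0 and at most 1/n when x \<ge> Y/n. Since f is the squared distance to [0, Y/n],
  comparing f with the parabola (\<cdot> - u)^2 centred at the projection u of x bounds the expected
  change of f by 2 (x - u)(p - 1/n) + 1/n + p, whose first term is \<le> 0; the terms
  -3c - 3a/n absorb the rest. If a \<ge> mn - Y, condition (a) forces c = m, hence z_t = 0, and x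
  moves to x - 1/n \<ge> 0, where f is monotone.
\<close>

lemma measurable_count_space_Pair:
  fixes f :: "'a \<Rightarrow> 'b::countable" and g :: "'a \<Rightarrow> 'c::countable"
  assumes "f \<in> M \<rightarrow>\<^sub>M count_space UNIV" "g \<in> M \<rightarrow>\<^sub>M count_space UNIV"
  shows "(\<lambda>x. (f x, g x)) \<in> M \<rightarrow>\<^sub>M count_space UNIV"
  by (rule measurable_compose_countable[where f="\<lambda>i x. (i, g x)", OF _ assms(1)],
      rule measurable_compose_countable[where f="\<lambda>j x. (i, j)" for i, OF _ assms(2)]) simp

lemma measurable_count_space_map:
  fixes f :: "'i \<Rightarrow> 'a \<Rightarrow> 'b::countable"
  assumes "\<And>i. f i \<in> M \<rightarrow>\<^sub>M count_space UNIV"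
  shows "(\<lambda>x. map (\<lambda>i. f i x) xs) \<in> M \<rightarrow>\<^sub>M count_space UNIV"
proof (induction xs)
  case (Cons i xs)
  show ?case
    by (simp, rule measurable_compose_countable[where f="\<lambda>b x. b # map (\<lambda>i. f i x) xs", OF _ assms],
        rule measurable_compose_countable[where f="\<lambda>l x. b # l" for b, OF _ Cons]) simp
qed simp

lemma subalgebra_gen_alg:
  assumes "h \<in> M \<rightarrow>\<^sub>M count_space UNIV"
  shows "subalgebra M (gen_alg M h)"
proof -
  have "sets (gen_alg M h) = {h -` A \<inter> space M |A. A \<in> sets (count_space UNIV)}"
    unfolding gen_alg_def by (rule sets_vimage_algebra2) simp
  then show ?thesis
    using measurable_sets[OF assms] by (auto simp: subalgebra_def gen_alg_def)
qed

lemma measurable_gen_alg: "h \<in> gen_alg M h \<rightarrow>\<^sub>M count_space UNIV"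
  unfolding gen_alg_def by (rule measurable_vimage_algebra1) simp

lemma factor_through:
  assumes "\<And>x y. x \<in> A \<Longrightarrow> y \<in> A \<Longrightarrow> h x = h y \<Longrightarrow> f x = f y"
  obtains \<phi> where "\<And>x. x \<in> A \<Longrightarrow> f x = \<phi> (h x)"
proof -
  define \<phi> where "\<phi> v = f (SOME y. y \<in> A \<and> h y = v)" for v
  have "f x = \<phi> (h x)" if x: "x \<in> A" for x
  proof -
    define y where "y = (SOME y. y \<in> A \<and> h y = h x)"
    have "y \<in> A \<and> h y = h x" unfolding y_def by (rule someI[of _ x]) (simp add: x)
    then have "f x = f y" using assms[of x y] x by simp
    then show ?thesis by (simp add: \<phi>_def y_def)
  qed
  then show ?thesis using that by blast
qed

lemma finite_image_factor:
  assumes "finite (h ` A)" "\<And>x y. x \<in> A \<Longrightarrow> y \<in> A \<Longrightarrow> h x = h y \<Longrightarrow> f x = f y"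
  shows "finite (f ` A)"
proof -
  obtain \<phi> where "\<And>x. x \<in> A \<Longrightarrow> f x = \<phi> (h x)" using factor_through assms(2) by blast
  then have "f ` A = \<phi> ` h ` A" by (auto simp: image_image)
  with assms(1) show ?thesis by simp
qed

lemma measurable_factor:
  assumes "h \<in> F \<rightarrow>\<^sub>M count_space UNIV" "space N = UNIV"
    and "\<And>x y. x \<in> space F \<Longrightarrow> y \<in> space F \<Longrightarrow> h x = h y \<Longrightarrow> f x = f y"
  shows "f \<in> F \<rightarrow>\<^sub>M N"
proof -
  obtain \<phi> where \<phi>: "\<And>x. x \<in> space F \<Longrightarrow> f x = \<phi> (h x)" using factor_through assms(3) by blast
  have "(\<lambda>x. \<phi> (h x)) \<in> F \<rightarrow>\<^sub>M N"
    using measurable_comp[OF assms(1), of \<phi> N] assms(2) by (simp add: comp_def)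
  then show ?thesis using measurable_cong[of F f "\<lambda>x. \<phi> (h x)" N] \<phi> by blast
qed

lemma (in finite_measure) integrable_finite_range:
  fixes f :: "'a \<Rightarrow> real"
  assumes "f \<in> borel_measurable M" "finite (f ` space M)"
  shows "integrable M f"
  by (rule integrable_const_bound[where B="Max (abs ` f ` space M)"])
     (use assms in \<open>auto intro!: AE_I2 Max_ge\<close>)

lemma (in finite_measure) integrable_factor:
  fixes f :: "'a \<Rightarrow> real"
  assumes "h \<in> M \<rightarrow>\<^sub>M count_space UNIV" "finite (h ` space M)"
    and "\<And>x y. x \<in> space M \<Longrightarrow> y \<in> space M \<Longrightarrow> h x = h y \<Longrightarrow> f x = f y"
  shows "integrable M f"
proof (rule integrable_finite_range)
  show "f \<in> borel_measurable M" by (rule measurable_factor[OF assms(1) _ assms(3)]) simp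
  show "finite (f ` space M)" by (rule finite_image_factor[OF assms(2,3)])
qed

lemma (in sigma_finite_subalgebra) real_cond_exp_affine:
  assumes "integrable M W" "W \<in> borel_measurable F" "B \<in> borel_measurable F"
    and "Z \<in> borel_measurable M" "integrable M (\<lambda>x. B x * Z x)"
    and "X \<in> borel_measurable M" "AE x in M. X x = W x + B x * Z x"
  shows "AE x in M. real_cond_exp M F X x = W x + B x * real_cond_exp M F Z x"
proof -
  have "(\<lambda>x. W x + B x * Z x) \<in> borel_measurable M"
    using borel_measurable_integrable[OF assms(1)] borel_measurable_integrable[OF assms(5)]
    by (rule borel_measurable_add)
  then have "AE x in M. real_cond_exp M F X x = real_cond_exp M F (\<lambda>x. W x + B x * Z x) x"
    by (rule real_cond_exp_cong[OF assms(7,6)])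
  with real_cond_exp_add[OF assms(1,5)] real_cond_exp_F_meas[OF assms(1,2)]
       real_cond_exp_mult[OF assms(3,4,5)]
  show ?thesis by eventually_elim simp
qed

lemma (in sigma_finite_subalgebra) real_cond_exp_unit_interval:
  assumes "integrable M f" "\<And>x. x \<in> space M \<Longrightarrow> 0 \<le> f x \<and> f x \<le> 1"
  shows "AE x in M. 0 \<le> real_cond_exp M F f x \<and> real_cond_exp M F f x \<le> 1"
proof -
  have "AE x in M. 0 \<le> real_cond_exp M F f x"
    by (rule real_cond_exp_pos) (use assms in \<open>auto intro: AE_I2\<close>)
  moreover have "AE x in M. real_cond_exp M F f x \<le> 1"
    by (rule real_cond_exp_le_c[OF assms(1)]) (use assms(2) in \<open>auto intro: AE_I2\<close>)
  ultimately show ?thesis by eventually_elim simp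
qed

lemma (in finite_measure_subalgebra) real_cond_exp_affine_factor:
  fixes h :: "'a \<Rightarrow> 'b::countable" and z :: "'a \<Rightarrow> 'c::countable"
  assumes h_F: "h \<in> F \<rightarrow>\<^sub>M count_space UNIV" and h_finite: "finite (h ` space M)"
    and z_M: "z \<in> M \<rightarrow>\<^sub>M count_space UNIV" and z_finite: "finite (z ` space M)"
    and W_B: "\<And>x y. x \<in> space M \<Longrightarrow> y \<in> space M \<Longrightarrow> h x = h y \<Longrightarrow> W x = W y \<and> B x = B y"
    and Z: "\<And>x y. x \<in> space M \<Longrightarrow> y \<in> space M \<Longrightarrow> z x = z y \<Longrightarrow> Z x = Z y"
    and X: "\<And>x y. x \<in> space M \<Longrightarrow> y \<in> space M \<Longrightarrow> h x = h y \<Longrightarrow> z x = z y \<Longrightarrow> X x = X y"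
    and decomp: "AE x in M. X x = W x + B x * Z x"
  shows "AE x in M. real_cond_exp M F X x = W x + B x * real_cond_exp M F Z x"
proof (rule real_cond_exp_affine[OF _ _ _ _ _ _ decomp])
  have space_F: "space F = space M" using subalg by (simp add: subalgebra_def)
  have h_M: "h \<in> M \<rightarrow>\<^sub>M count_space UNIV" by (rule measurable_from_subalg[OF subalg h_F])
  have hz_M: "(\<lambda>x. (h x, z x)) \<in> M \<rightarrow>\<^sub>M count_space UNIV"
    by (rule measurable_count_space_Pair[OF h_M z_M])
  have hz_finite: "finite ((\<lambda>x. (h x, z x)) ` space M)"
    by (rule finite_subset[of _ "h ` space M \<times> z ` space M"]) (use h_finite z_finite in auto)
  show "integrable M W" by (rule integrable_factor[OF h_M h_finite]) (auto dest: W_B)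
  show "W \<in> borel_measurable F" by (rule measurable_factor[OF h_F]) (auto simp: space_F dest: W_B)
  show "B \<in> borel_measurable F" by (rule measurable_factor[OF h_F]) (auto simp: space_F dest: W_B)
  show "Z \<in> borel_measurable M" by (rule measurable_factor[OF z_M]) (auto dest: Z)
  show "integrable M (\<lambda>x. B x * Z x)"
  proof (rule integrable_factor[OF hz_M hz_finite])
    fix x y assume "x \<in> space M" "y \<in> space M" "(h x, z x) = (h y, z y)"
    with W_B[of x y] Z[of x y] show "B x * Z x = B y * Z y" by simp
  qed
  show "X \<in> borel_measurable M" by (rule measurable_factor[OF hz_M]) (auto intro: X)
qed

definition gap_sq :: "real \<Rightarrow> real \<Rightarrow> real" where
  "gap_sq Y x = (if x \<le> 0 then x\<^sup>2 else if x < Y then 0 else (x - Y)\<^sup>2)"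

lemma gap_sq_eq_sq_dist_clamp:
  "0 \<le> Y \<Longrightarrow> gap_sq Y x = (x - max 0 (min x Y))\<^sup>2"
  by (simp add: gap_sq_def)

lemma gap_sq_le_sq_dist:
  assumes "0 \<le> u" "u \<le> Y"
  shows "gap_sq Y y \<le> (y - u)\<^sup>2"
  using assms unfolding gap_sq_def by (auto simp flip: abs_le_square_iff)

lemma gap_sq_mono:
  assumes "0 \<le> x" "x \<le> y"
  shows "gap_sq Y x \<le> gap_sq Y y"
  using assms unfolding gap_sq_def by (auto intro!: power_mono)

text \<open>If k is guessed in a round, a grows by 1 and c by z_t, so x = c - a/n moves to x - 1/n
  (z_t = 0) or to x + 1 - 1/n (z_t = 1); these are the resulting changes of X.\<close>

definition incr_miss :: "real \<Rightarrow> real \<Rightarrow> real \<Rightarrow> real" where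
  "incr_miss Y n x = gap_sq Y (x - 1 / n) - gap_sq Y x - 3 / n"

definition incr_hit :: "real \<Rightarrow> real \<Rightarrow> real \<Rightarrow> real" where
  "incr_hit Y n x = gap_sq Y (x + 1 - 1 / n) - gap_sq Y x - 3 - 3 / n"

lemma incr_mixture_nonpos:
  fixes n p x Y :: real
  assumes "1 \<le> n" "0 \<le> Y" "0 \<le> p" "p \<le> 1"
    and "x \<le> 0 \<Longrightarrow> 1 / n \<le> p" "Y \<le> x \<Longrightarrow> p \<le> 1 / n"
  shows "(1 - p) * incr_miss Y n x + p * incr_hit Y n x \<le> 0"
proof -
  define e where "e = 1 / n"
  define d where "d = x - max 0 (min x Y)"
  have e: "0 < e" "e \<le> 1" using assms(1) by (auto simp: e_def)
  have fx: "gap_sq Y x = d\<^sup>2"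
    using gap_sq_eq_sq_dist_clamp[OF assms(2)] by (simp add: d_def)
  have f_down: "gap_sq Y (x - e) \<le> (d - e)\<^sup>2"
    using gap_sq_le_sq_dist[of "max 0 (min x Y)" Y "x - e"] assms(2) by (simp add: d_def algebra_simps)
  have f_up: "gap_sq Y (x + 1 - e) \<le> (d + 1 - e)\<^sup>2"
    using gap_sq_le_sq_dist[of "max 0 (min x Y)" Y "x + 1 - e"] assms(2) by (simp add: d_def algebra_simps)
  have drift: "d * (p - e) \<le> 0"
    using assms(5,6) by (cases "x \<le> 0"; cases "Y \<le> x") (auto simp: d_def e_def mult_le_0_iff)
  have "(1 - p) * (gap_sq Y (x - e) - gap_sq Y x - 3 * e) + p * (gap_sq Y (x + 1 - e) - gap_sq Y x - 3 - 3 * e)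
      \<le> (1 - p) * ((d - e)\<^sup>2 - d\<^sup>2 - 3 * e) + p * ((d + 1 - e)\<^sup>2 - d\<^sup>2 - 3 - 3 * e)"
    unfolding fx using f_down f_up assms(3,4) by (intro add_mono mult_left_mono) auto
  also have "\<dots> = 2 * (d * (p - e)) + (1 - p) * e\<^sup>2 + p * (1 - e)\<^sup>2 - 3 * e - 3 * p"
    by (simp add: power2_eq_square algebra_simps)
  also have "\<dots> \<le> 0"
  proof -
    have "(1 - p) * e\<^sup>2 \<le> e" using e assms(3,4) by (simp add: power2_eq_square mult_le_one mult_left_le)
    moreover have "p * (1 - e)\<^sup>2 \<le> p" using e assms(3) by (simp add: mult_left_le power_le_one)
    ultimately show ?thesis using drift e assms(3) by linarith
  qed
  finally show ?thesis by (simp add: incr_miss_def incr_hit_def e_def)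
qed

text \<open>The change of X_{k,t} in a round guessing k, averaged with weight p on z_t = 1, given
  a(k,t) = a and c(k,t) = c. In the saturated case a \<ge> mn - Y, condition (a) rules out z_t = 1.\<close>

definition expected_incr :: "real \<Rightarrow> real \<Rightarrow> real \<Rightarrow> real \<Rightarrow> real \<Rightarrow> real \<Rightarrow> real" where
  "expected_incr m n Y a c p =
     (if a < m * n - Y
      then (1 - p) * incr_miss (Y / n) n (c - a / n) + p * incr_hit (Y / n) n (c - a / n)
      else incr_miss (Y / n) n (c - a / n))"

lemma expected_incr_affine:
  "expected_incr m n Y a c p = expected_incr m n Y a c 0 + p * (expected_incr m n Y a c 1 - expected_incr m n Y a c 0)"
  by (simp add: expected_incr_def algebra_simps)

lemma expected_incr_nonpos:
  fixes a c m n Y p :: real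
  assumes n: "1 \<le> n" and Y: "0 \<le> Y" and p: "0 \<le> p" "p \<le> 1"
    and c_lower: "m - max (m * n - a - Y) 0 \<le> c" and a_upper: "a + 1 \<le> m * n"
    and p_eq: "a < m * n - Y \<Longrightarrow> p = (m - c) / (m * n - a - Y)"
  shows "expected_incr m n Y a c p \<le> 0"
proof (cases "a < m * n - Y")
  case True
  define D where "D = m * n - a - Y"
  have D: "0 < D" and p_D: "p = (m - c) / D" using True p_eq by (simp_all add: D_def)
  have n0: "0 < n" using n by simp
  have "1 / n \<le> p" if "c - a / n \<le> 0"
  proof -
    have "n * c \<le> a" using that n0 by (simp add: field_simps)
    then have "D \<le> n * (m - c)" using Y by (simp add: D_def algebra_simps)
    then show ?thesis using D n0 by (simp add: p_D field_simps)
  qed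
  moreover have "p \<le> 1 / n" if "Y / n \<le> c - a / n"
  proof -
    have "Y \<le> n * c - a" using that n0 by (simp add: field_simps)
    then have "n * (m - c) \<le> D" by (simp add: D_def algebra_simps)
    then show ?thesis using D n0 by (simp add: p_D field_simps)
  qed
  ultimately show ?thesis
    using True incr_mixture_nonpos[OF n _ p] Y n0 by (simp add: expected_incr_def)
next
  case False
  have "m \<le> c" using False c_lower by simp
  moreover have "(a + 1) / n \<le> m" using a_upper n by (simp add: pos_divide_le_eq mult.commute)
  ultimately have "0 \<le> c - a / n - 1 / n" by (simp add: add_divide_distrib)
  then have "gap_sq (Y / n) (c - a / n - 1 / n) \<le> gap_sq (Y / n) (c - a / n)"
    by (rule gap_sq_mono) (use n in simp)
  moreover have "0 \<le> 3 / n" using n by simp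
  ultimately have "incr_miss (Y / n) n (c - a / n) \<le> 0" unfolding incr_miss_def by linarith
  with False show ?thesis by (simp add: expected_incr_def)
qed

lemma card_interval_filter_Suc:
  "card {i. 1 \<le> i \<and> i < Suc t \<and> P i} = card {i. 1 \<le> i \<and> i < t \<and> P i} + (if 1 \<le> t \<and> P t then 1 else 0)"
proof (cases "1 \<le> t \<and> P t")
  case True
  then have "{i. 1 \<le> i \<and> i < Suc t \<and> P i} = insert t {i. 1 \<le> i \<and> i < t \<and> P i}" by auto
  with True show ?thesis by simp
next
  case False
  then have "{i. 1 \<le> i \<and> i < Suc t \<and> P i} = {i. 1 \<le> i \<and> i < t \<and> P i}" by (auto simp: less_Suc_eq)
  with False show ?thesis by simp
qed

lemma acnt_Suc:
  "1 \<le> t \<Longrightarrow> acnt g k (Suc t) \<omega> = acnt g k t \<omega> + (if g t \<omega> = k then 1 else 0)"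
  unfolding acnt_def using card_interval_filter_Suc[of t "\<lambda>i. g i \<omega> = k"] by simp

lemma ccnt_Suc:
  "1 \<le> t \<Longrightarrow> ccnt g z k (Suc t) \<omega> = ccnt g z k t \<omega> + (if g t \<omega> = k \<and> z t \<omega> = 1 then 1 else 0)"
  unfolding ccnt_def using card_interval_filter_Suc[of t "\<lambda>i. g i \<omega> = k \<and> z i \<omega> = 1"] by simp

lemma acnt_less: "1 \<le> t \<Longrightarrow> acnt g k t \<omega> < t"
proof -
  assume "1 \<le> t"
  have "acnt g k t \<omega> \<le> card {1..<t}" unfolding acnt_def by (rule card_mono) auto
  with \<open>1 \<le> t\<close> show ?thesis by simp
qed

lemma ccnt_less: "1 \<le> t \<Longrightarrow> ccnt g z k t \<omega> < t"
proof -
  assume "1 \<le> t"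
  have "ccnt g z k t \<omega> \<le> card {1..<t}" unfolding ccnt_def by (rule card_mono) auto
  with \<open>1 \<le> t\<close> show ?thesis by simp
qed

lemma Xv_Suc:
  fixes m n k t :: nat and g z :: "nat \<Rightarrow> 'a \<Rightarrow> nat" and \<omega> :: 'a
  defines "Y \<equiv> real (Yc m n) / real n"
    and "x \<equiv> real (ccnt g z k t \<omega>) - real (acnt g k t \<omega>) / real n"
  assumes "1 \<le> t"
  shows "Xv m n g z k (Suc t) \<omega> = Xv m n g z k t \<omega>
           + (if g t \<omega> \<noteq> k then 0 else if z t \<omega> = 1 then incr_hit Y n x else incr_miss Y n x)"
proof -
  have fpen: "fpen m n = gap_sq Y" by (auto simp: fpen_def gap_sq_def Y_def)
  show ?thesis
    using acnt_Suc[OF assms(3), of g k \<omega>] ccnt_Suc[OF assms(3), of g z k \<omega>]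
    by (auto simp: Xv_def fpen incr_hit_def incr_miss_def x_def add_divide_distrib diff_divide_distrib algebra_simps)
qed

lemma Xv_Suc_eq_expected_incr:
  fixes m n k t :: nat and g z :: "nat \<Rightarrow> 'a \<Rightarrow> nat" and \<omega> :: 'a
  assumes t: "1 \<le> t" and z01: "z t \<omega> \<in> {0, 1}"
    and c_lower: "real m - max (real (m * n) - real (acnt g k t \<omega>) - real (Yc m n)) 0 \<le> real (ccnt g z k t \<omega>)"
    and c_upper: "ccnt g z k (Suc t) \<omega> \<le> m"
  shows "Xv m n g z k (Suc t) \<omega> = Xv m n g z k t \<omega>
    + (if g t \<omega> = k then expected_incr m n (Yc m n) (acnt g k t \<omega>) (ccnt g z k t \<omega>) (z t \<omega>) else 0)"
proof -
  have sat: "z t \<omega> = 0" if "g t \<omega> = k" "\<not> real (acnt g k t \<omega>) < real m * real n - real (Yc m n)"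
  proof -
    from c_lower that(2) have "m \<le> ccnt g z k t \<omega>" by simp
    with c_upper ccnt_Suc[OF t, of g z k \<omega>] that(1) have "z t \<omega> \<noteq> 1" by auto
    with z01 show ?thesis by auto
  qed
  show ?thesis
  proof (cases "g t \<omega> = k")
    case True
    from z01 consider "z t \<omega> = 0" | "z t \<omega> = 1" by auto
    then show ?thesis
      using Xv_Suc[OF t, of m n g z k \<omega>] True sat by cases (auto simp: expected_incr_def)
  qed (simp add: Xv_Suc[OF t])
qed

lemma Xv_Suc_cond_exp:
  fixes M F :: "'a measure" and g z :: "nat \<Rightarrow> 'a \<Rightarrow> nat" and m n k t :: nat
  defines "incr \<equiv> \<lambda>\<omega>. expected_incr m n (Yc m n) (acnt g k t \<omega>) (ccnt g z k t \<omega>)"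
  assumes M: "prob_space M" and F: "subalgebra M F" and t: "1 \<le> t"
    and counts_meas: "(\<lambda>\<omega>. (acnt g k t \<omega>, ccnt g z k t \<omega>, g t \<omega> = k)) \<in> F \<rightarrow>\<^sub>M count_space UNIV"
    and z_meas: "z t \<in> M \<rightarrow>\<^sub>M count_space UNIV" and z01: "\<And>\<omega>. \<omega> \<in> space M \<Longrightarrow> z t \<omega> \<in> {0, 1}"
    and c_bounds: "AE \<omega> in M.
      real m - max (real (m * n) - real (acnt g k t \<omega>) - real (Yc m n)) 0 \<le> real (ccnt g z k t \<omega>)
      \<and> ccnt g z k (Suc t) \<omega> \<le> m"
  shows "AE \<omega> in M. real_cond_exp M F (Xv m n g z k (Suc t)) \<omega>
    = Xv m n g z k t \<omega> + (if g t \<omega> = k then incr \<omega> (real_cond_exp M F (\<lambda>\<omega>. real (z t \<omega>)) \<omega>) else 0)"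
proof -
  interpret P: prob_space M by (rule M)
  interpret finite_measure_subalgebra M F
    by (intro finite_measure_subalgebra.intro finite_measure_subalgebra_axioms.intro P.finite_measure_axioms F)
  define h where "h \<omega> = (acnt g k t \<omega>, ccnt g z k t \<omega>, g t \<omega> = k)" for \<omega>
  define W where "W \<omega> = Xv m n g z k t \<omega> + (if g t \<omega> = k then incr \<omega> 0 else 0)" for \<omega>
  define B where "B \<omega> = (if g t \<omega> = k then incr \<omega> 1 - incr \<omega> 0 else 0)" for \<omega>
  define Z where "Z = (\<lambda>\<omega>. real (z t \<omega>))"
  have h_F: "h \<in> F \<rightarrow>\<^sub>M count_space UNIV" using counts_meas by (simp add: h_def[abs_def])
  have h_finite: "finite (h ` space M)"
    by (rule finite_subset[of _ "{..<t} \<times> {..<t} \<times> UNIV"])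
      (use acnt_less[OF t] ccnt_less[OF t] in \<open>auto simp: h_def\<close>)
  have z_finite: "finite (z t ` space M)"
    by (rule finite_subset[of _ "{0, 1}"]) (auto dest: z01)
  have h_eq: "acnt g k t \<omega> = acnt g k t \<omega>' \<and> ccnt g z k t \<omega> = ccnt g z k t \<omega>'
      \<and> (g t \<omega> = k \<longleftrightarrow> g t \<omega>' = k) \<and> Xv m n g z k t \<omega> = Xv m n g z k t \<omega>'" if "h \<omega> = h \<omega>'" for \<omega> \<omega>'
    using that by (simp add: h_def Xv_def)
  have incr_affine: "incr \<omega> p = incr \<omega> 0 + p * (incr \<omega> 1 - incr \<omega> 0)" for \<omega> p
    unfolding incr_def by (rule expected_incr_affine)
  have decomp: "AE \<omega> in M. Xv m n g z k (Suc t) \<omega> = W \<omega> + B \<omega> * Z \<omega>"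
    using c_bounds AE_space
  proof eventually_elim
    case (elim \<omega>)
    then have "Xv m n g z k (Suc t) \<omega> = Xv m n g z k t \<omega> + (if g t \<omega> = k then incr \<omega> (Z \<omega>) else 0)"
      using Xv_Suc_eq_expected_incr[where z = z and \<omega> = \<omega>, OF t z01[OF elim(2)]]
      by (simp add: incr_def Z_def)
    then show ?case
      using incr_affine[of \<omega> "Z \<omega>"] by (simp add: W_def B_def algebra_simps)
  qed
  have "AE \<omega> in M. real_cond_exp M F (Xv m n g z k (Suc t)) \<omega> = W \<omega> + B \<omega> * real_cond_exp M F Z \<omega>"
  proof (rule real_cond_exp_affine_factor[OF h_F h_finite z_meas z_finite _ _ _ decomp])
    fix \<omega> \<omega>' assume "h \<omega> = h \<omega>'"
    with h_eq[OF this] show "W \<omega> = W \<omega>' \<and> B \<omega> = B \<omega>'" by (simp add: W_def B_def incr_def)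
    assume "z t \<omega> = z t \<omega>'"
    with h_eq[OF \<open>h \<omega> = h \<omega>'\<close>] show "Xv m n g z k (Suc t) \<omega> = Xv m n g z k (Suc t) \<omega>'"
      by (simp add: Xv_Suc[OF t])
  qed (simp add: Z_def)
  then show ?thesis
  proof eventually_elim
    case (elim \<omega>)
    then show ?case
      using incr_affine[of \<omega> "real_cond_exp M F Z \<omega>"] by (simp add: W_def B_def Z_def algebra_simps)
  qed
qed

lemma Xv_cond_exp_Suc_le:
  fixes M F :: "'a measure" and g z :: "nat \<Rightarrow> 'a \<Rightarrow> nat" and m n k t :: nat
  assumes M: "prob_space M" and F: "subalgebra M F"
    and n: "0 < n" and t: "1 \<le> t" "t \<le> m * n"
    and counts_meas: "(\<lambda>\<omega>. (acnt g k t \<omega>, ccnt g z k t \<omega>, g t \<omega> = k)) \<in> F \<rightarrow>\<^sub>M count_space UNIV"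
    and z_meas: "z t \<in> M \<rightarrow>\<^sub>M count_space UNIV" and z01: "\<And>\<omega>. \<omega> \<in> space M \<Longrightarrow> z t \<omega> \<in> {0, 1}"
    and c_bounds: "AE \<omega> in M.
      real m - max (real (m * n) - real (acnt g k t \<omega>) - real (Yc m n)) 0 \<le> real (ccnt g z k t \<omega>)
      \<and> ccnt g z k (Suc t) \<omega> \<le> m"
    and z_cond_exp: "AE \<omega> in M. g t \<omega> = k \<longrightarrow> real (acnt g k t \<omega>) < real (m * n) - real (Yc m n) \<longrightarrow>
      real_cond_exp M F (\<lambda>\<omega>. real (z t \<omega>)) \<omega>
      = (real m - real (ccnt g z k t \<omega>)) / (real (m * n) - real (acnt g k t \<omega>) - real (Yc m n))"
  shows "AE \<omega> in M. real_cond_exp M F (Xv m n g z k (Suc t)) \<omega> \<le> Xv m n g z k t \<omega>"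
proof -
  interpret P: prob_space M by (rule M)
  interpret finite_measure_subalgebra M F
    by (intro finite_measure_subalgebra.intro finite_measure_subalgebra_axioms.intro P.finite_measure_axioms F)
  have "integrable M (\<lambda>\<omega>. real (z t \<omega>))"
    by (rule P.integrable_factor[OF z_meas finite_subset[of _ "{0, 1}"]]) (auto dest: z01)
  then have p_bounds: "AE \<omega> in M. 0 \<le> real_cond_exp M F (\<lambda>\<omega>. real (z t \<omega>)) \<omega>
      \<and> real_cond_exp M F (\<lambda>\<omega>. real (z t \<omega>)) \<omega> \<le> 1"
    by (rule real_cond_exp_unit_interval) (auto dest: z01)
  have X_Suc: "AE \<omega> in M. real_cond_exp M F (Xv m n g z k (Suc t)) \<omega>
      = Xv m n g z k t \<omega> + (if g t \<omega> = k then expected_incr m n (Yc m n) (acnt g k t \<omega>) (ccnt g z k t \<omega>)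
          (real_cond_exp M F (\<lambda>\<omega>. real (z t \<omega>)) \<omega>) else 0)"
    by (rule Xv_Suc_cond_exp[OF M F t(1) counts_meas z_meas z01 c_bounds])
  show ?thesis
    using X_Suc p_bounds z_cond_exp c_bounds
  proof eventually_elim
    case (elim \<omega>)
    have "real (acnt g k t \<omega>) + 1 \<le> real m * real n"
      using acnt_less[OF t(1), of g k \<omega>] t(2) by (simp flip: of_nat_mult of_nat_Suc)
    with elim n have "g t \<omega> = k \<Longrightarrow> expected_incr m n (Yc m n) (acnt g k t \<omega>) (ccnt g z k t \<omega>)
        (real_cond_exp M F (\<lambda>\<omega>. real (z t \<omega>)) \<omega>) \<le> 0"
      by (intro expected_incr_nonpos) auto
    with elim(1) show ?case by auto
  qed
qed

lemma counts_determined_by_history: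
  assumes "1 \<le> t"
    and "map (\<lambda>i. g i \<omega>) [1..<t+1] = map (\<lambda>i. g i \<omega>') [1..<t+1]"
    and "map (\<lambda>i. z i \<omega>) [1..<t] = map (\<lambda>i. z i \<omega>') [1..<t]"
  shows "acnt g k t \<omega> = acnt g k t \<omega>' \<and> ccnt g z k t \<omega> = ccnt g z k t \<omega>' \<and> g t \<omega> = g t \<omega>'"
proof -
  have g: "g i \<omega> = g i \<omega>'" if "1 \<le> i" "i \<le> t" for i
    using assms(2) that by (auto simp: map_eq_conv simp del: upt_Suc)
  have z: "z i \<omega> = z i \<omega>'" if "1 \<le> i" "i < t" for i
    using assms(3) that by (simp add: map_eq_conv)
  have "{i. 1 \<le> i \<and> i < t \<and> g i \<omega> = k} = {i. 1 \<le> i \<and> i < t \<and> g i \<omega>' = k}"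
    "{i. 1 \<le> i \<and> i < t \<and> g i \<omega> = k \<and> z i \<omega> = 1} = {i. 1 \<le> i \<and> i < t \<and> g i \<omega>' = k \<and> z i \<omega>' = 1}"
    using g z by auto
  with g[of t] assms(1) show ?thesis by (simp add: acnt_def ccnt_def)
qed

theorem lemma2p2:
  fixes M :: "'a measure" and N :: "'r measure"
    and m n :: nat
    and deck :: "'a \<Rightarrow> nat \<Rightarrow> nat"
    and R :: "'a \<Rightarrow> 'r" and G :: "nat \<Rightarrow> 'r \<Rightarrow> nat list \<Rightarrow> nat"
    and g z :: "nat \<Rightarrow> 'a \<Rightarrow> nat"
  assumes P: "prob_space M"
    and mpos: "m > 0" and npos: "n > 0"
    and nbig: "real n \<ge> 1200 * sqrt (real m)"
    \<comment> \<open>the deck is uniformly shuffled\<close>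
    and deck_meas: "deck \<in> M \<rightarrow>\<^sub>M count_space (decks m n)"
    and deck_unif: "\<forall>d\<in>decks m n. measure M (deck -` {d} \<inter> space M) = 1 / real (card (decks m n))"
    \<comment> \<open>the (possibly randomized) strategy: g_t is a function of the guesser's private
        randomness R (independent of the deck) and of y_1, ..., y_{t-1}\<close>
    and R_meas: "R \<in> M \<rightarrow>\<^sub>M N"
    and R_indep: "prob_space.indep_set M (sets (vimage_algebra (space M) R N))
                 (sets (vimage_algebra (space M) deck (count_space (decks m n))))"
    and g_strat: "\<forall>t\<in>{1..m*n}. \<forall>\<omega>\<in>space M.
                    g t \<omega> = G t (R \<omega>) (map (\<lambda>i. yind deck g i \<omega>) [1..<t])"
    and G_range: "\<forall>t\<in>{1..m*n}. \<forall>r ys. G t r ys \<in> {1..n}"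
    and g_meas: "\<forall>t. g t \<in> M \<rightarrow>\<^sub>M count_space UNIV"
    \<comment> \<open>the auxiliary 0/1 vector z\<close>
    and z_meas: "\<forall>t. z t \<in> M \<rightarrow>\<^sub>M count_space UNIV"
    and z_01: "\<forall>t\<in>{1..m*n}. \<forall>\<omega>\<in>space M. z t \<omega> \<in> {0, 1}"
    \<comment> \<open>(a)\<close>
    and cond_a: "AE \<omega> in M. \<forall>k\<in>{1..n}. \<forall>t\<in>{1..m*n+1}.
        real m - max (real (m*n) - real (acnt g k t \<omega>) - real (Yc m n)) 0 \<le> real (ccnt g z k t \<omega>)
        \<and> ccnt g z k t \<omega> \<le> m"
    \<comment> \<open>(b)\<close>
    and cond_b: "\<forall>t\<in>{1..m*n}.
        cond_indep_sets M
          (gen_alg M (\<lambda>\<omega>. (map (\<lambda>i. g i \<omega>) [1..<t+1], map (\<lambda>i. yind deck g i \<omega>) [1..<t+1])))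
          (\<lambda>j. case j of
                 None \<Rightarrow> sets (gen_alg M (\<lambda>\<omega>. (map (\<lambda>i. g i \<omega>) [1..<m*n+1],
                                                map (\<lambda>i. yind deck g i \<omega>) [1..<m*n+1])))
               | Some i \<Rightarrow> sets (gen_alg M (z i)))
          (insert None (Some ` {1..t}))"
    \<comment> \<open>(c)\<close>
    and cond_c: "\<forall>t\<in>{1..m*n}. AE \<omega> in M.
        real (acnt g (g t \<omega>) t \<omega>) < real (m*n) - real (Yc m n) \<longrightarrow>
        real_cond_exp M (gen_alg M (\<lambda>\<omega>. (map (\<lambda>i. g i \<omega>) [1..<t+1], map (\<lambda>i. z i \<omega>) [1..<t])))
                      (\<lambda>\<omega>. real (z t \<omega>)) \<omega>
        = (real m - real (ccnt g z (g t \<omega>) t \<omega>))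
          / (real (m*n) - real (acnt g (g t \<omega>) t \<omega>) - real (Yc m n))"
    \<comment> \<open>(d)\<close>
    and cond_d: "\<forall>t\<in>{1..m*n}. AE \<omega> in M.
        real_cond_exp M (gen_alg M (\<lambda>\<omega>. (map (\<lambda>i. g i \<omega>) [1..<t+1], map (\<lambda>i. yind deck g i \<omega>) [1..<t])))
                      (\<lambda>\<omega>. real (yind deck g t \<omega>)) \<omega>
        \<le> real_cond_exp M (gen_alg M (\<lambda>\<omega>. (map (\<lambda>i. g i \<omega>) [1..<t+1], map (\<lambda>i. z i \<omega>) [1..<t])))
                      (\<lambda>\<omega>. real (z t \<omega>)) \<omega>
        \<longrightarrow> yind deck g t \<omega> \<le> z t \<omega>"
  shows "\<forall>k\<in>{1..n}. \<forall>t\<in>{1..m*n}. AE \<omega> in M.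
           real_cond_exp M (gen_alg M (\<lambda>\<omega>. (map (\<lambda>i. g i \<omega>) [1..<t+1], map (\<lambda>i. z i \<omega>) [1..<t])))
                         (Xv m n g z k (t+1)) \<omega>
           \<le> Xv m n g z k t \<omega>"
proof (intro ballI)
  fix k t assume k: "k \<in> {1..n}" and t: "t \<in> {1..m*n}"
  define H where "H = (\<lambda>\<omega>. (map (\<lambda>i. g i \<omega>) [1..<t+1], map (\<lambda>i. z i \<omega>) [1..<t]))"
  have H_M: "H \<in> M \<rightarrow>\<^sub>M count_space UNIV"
    unfolding H_def using g_meas z_meas by (intro measurable_count_space_Pair measurable_count_space_map) auto
  have counts_meas: "(\<lambda>\<omega>. (acnt g k t \<omega>, ccnt g z k t \<omega>, g t \<omega> = k)) \<in> gen_alg M H \<rightarrow>\<^sub>M count_space UNIV"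
  proof (rule measurable_factor[OF measurable_gen_alg])
    fix \<omega> \<omega>' assume "H \<omega> = H \<omega>'"
    then have "map (\<lambda>i. g i \<omega>) [1..<t+1] = map (\<lambda>i. g i \<omega>') [1..<t+1]"
      "map (\<lambda>i. z i \<omega>) [1..<t] = map (\<lambda>i. z i \<omega>') [1..<t]"
      by (simp_all add: H_def)
    with t show "(acnt g k t \<omega>, ccnt g z k t \<omega>, g t \<omega> = k) = (acnt g k t \<omega>', ccnt g z k t \<omega>', g t \<omega>' = k)"
      using counts_determined_by_history[of t g \<omega> \<omega>' z k] by simp
  qed simp
  have c_bounds: "AE \<omega> in M.
      real m - max (real (m * n) - real (acnt g k t \<omega>) - real (Yc m n)) 0 \<le> real (ccnt g z k t \<omega>)
      \<and> ccnt g z k (Suc t) \<omega> \<le> m"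
    using cond_a by eventually_elim (use k t in auto)
  have z_cond_exp: "AE \<omega> in M. g t \<omega> = k \<longrightarrow> real (acnt g k t \<omega>) < real (m * n) - real (Yc m n) \<longrightarrow>
      real_cond_exp M (gen_alg M H) (\<lambda>\<omega>. real (z t \<omega>)) \<omega>
      = (real m - real (ccnt g z k t \<omega>)) / (real (m * n) - real (acnt g k t \<omega>) - real (Yc m n))"
    using cond_c t by (auto simp: H_def elim!: eventually_mono)
  have "AE \<omega> in M. real_cond_exp M (gen_alg M H) (Xv m n g z k (Suc t)) \<omega> \<le> Xv m n g z k t \<omega>"
    using t z_meas z_01
    by (intro Xv_cond_exp_Suc_le[OF P subalgebra_gen_alg[OF H_M] npos _ _ counts_meas _ _ c_bounds z_cond_exp])
      auto
  then show "AE \<omega> in M. real_cond_exp M (gen_alg M (\<lambda>\<omega>. (map (\<lambda>i. g i \<omega>) [1..<t+1], map (\<lambda>i. z i \<omega>) [1..<t])))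
      (Xv m n g z k (t+1)) \<omega> \<le> Xv m n g z k t \<omega>"
    by (simp add: H_def)
qed

end
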